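(* Let $G$ be a finite group with identity $e$, $R[G]$ its real group algebra, and $S=\{x\in R[G]: \sum_g x_g=1,\ x_g\ge0\ \forall g\}$. Let $(p^{[n]}(t))_{n\in\mathbb N}$, $p^{[n]}(t)=\sum_{k=0}^\infty a_k^{[n]}t^k$, be any sequence of real power series with $\sum_{k=0}^\infty|a_k^{[n]}|<\infty$ for every $n$ and $\lim_{n\to\infty}\sup_{k\ge1}|a_k^{[n]}|=0$. Let $x\in S$ with $n_{xc_x}=n_x$. (1) If $c_x\neq e$, then $\lim_{n\to\infty}p^{[n]}(x)$ exists if and only if $\lim_{n\to\infty}a_0^{[n]}$ exists and $\lim_{n\to\infty}\sum_{k=0}^\infty a^{[n]}_{km_x+r}$ exists for every $0\le r<m_x$. (2) If $c_x=e$, then $\lim_{n\to\infty}p^{[n]}(x)$ exists if and only if $\lim_{n\to\infty}\sum_{k=0}^\infty a^{[n]}_{km_x+r}$ exists for every $0\le r<m_x$. When the limit exists, $$\lim_{n\to\infty}p^{[n]}(x)=c_x\sum_{r=0}^{m_x-1}x^r\lim_{n\to\infty}\sum_{k=0}^\infty a^{[n]}_{km_x+r}+(e-c_x)\lim_{n\to\infty}a_0^{[n]}.$$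
   Context: Here $(p^{[n]})$ is an arbitrary sequence (not necessarily iterates). For $y\in S$, $p^{[n]}(y)=a_0^{[n]}e+\sum_{k\ge1}a_k^{[n]}y^k$ (convergent). $\mathrm{Supp}(y)=\{g: y_g\ne0\}$, $\mathbb N=\{1,2,\dots\}$, Euclidean topology on $R[G]$. For $y\in S$: $n_y=\min\{k\in\mathbb N:(y^k)_e\ne0\}$; $G_y$ is the subgroup generated by $\mathrm{Supp}(y^{n_y})$; $c_y=\frac1{|G_y|}\sum_{g\in G_y}g$; $m_y=\min\{k\in\mathbb N: \mathrm{Supp}(y^k)\subset G_y\}$. Note $xc_x\in S$, so $n_{xc_x}$ is defined. *)

theory Defs
  imports "HOL-Analysis.Analysis"
begin

text \<open>Real group algebra R[G] of a finite group G (written additively, identity 0),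
  elements are functions G \<Rightarrow> real; the topology is the product topology
  (Function_Topology), which is the Euclidean topology since G is finite.\<close>

definition ga_unit :: "'g::{group_add,finite} \<Rightarrow> real" where
  "ga_unit = (\<lambda>h. if h = 0 then 1 else 0)"

definition ga_mult :: "('g::{group_add,finite} \<Rightarrow> real) \<Rightarrow> ('g \<Rightarrow> real) \<Rightarrow> ('g \<Rightarrow> real)" where
  "ga_mult x y = (\<lambda>h. \<Sum>g\<in>UNIV. x g * y (- g + h))"

primrec ga_pow :: "('g::{group_add,finite} \<Rightarrow> real) \<Rightarrow> nat \<Rightarrow> ('g \<Rightarrow> real)" where
  "ga_pow y 0 = ga_unit"
| "ga_pow y (Suc k) = ga_mult y (ga_pow y k)"

definition simplex_S :: "('g::{group_add,finite} \<Rightarrow> real) set" where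
  "simplex_S = {x. (\<Sum>g\<in>UNIV. x g) = 1 \<and> (\<forall>g. x g \<ge> 0)}"

definition Supp :: "('g \<Rightarrow> real) \<Rightarrow> 'g set" where
  "Supp y = {g. y g \<noteq> 0}"

definition gen_subgroup :: "'g::group_add set \<Rightarrow> 'g set" where
  "gen_subgroup A = \<Inter>{H. A \<subseteq> H \<and> 0 \<in> H \<and> (\<forall>a\<in>H. \<forall>b\<in>H. a + b \<in> H) \<and> (\<forall>a\<in>H. - a \<in> H)}"

definition n_of :: "('g::{group_add,finite} \<Rightarrow> real) \<Rightarrow> nat" where
  "n_of y = (LEAST k. 1 \<le> k \<and> ga_pow y k 0 \<noteq> 0)"

definition G_of :: "('g::{group_add,finite} \<Rightarrow> real) \<Rightarrow> 'g set" where
  "G_of y = gen_subgroup (Supp (ga_pow y (n_of y)))"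

definition c_of :: "('g::{group_add,finite} \<Rightarrow> real) \<Rightarrow> ('g \<Rightarrow> real)" where
  "c_of y = (\<lambda>h. if h \<in> G_of y then 1 / real (card (G_of y)) else 0)"

definition m_of :: "('g::{group_add,finite} \<Rightarrow> real) \<Rightarrow> nat" where
  "m_of y = (LEAST k. 1 \<le> k \<and> Supp (ga_pow y k) \<subseteq> G_of y)"

definition pser_eval :: "(nat \<Rightarrow> real) \<Rightarrow> ('g::{group_add,finite} \<Rightarrow> real) \<Rightarrow> ('g \<Rightarrow> real)" where
  "pser_eval a y = (\<lambda>h. a 0 * ga_unit h + (\<Sum>k. a (Suc k) * ga_pow y (Suc k) h))"

end

theory Submission
  imports Defs
begin

(*
  Write S = Supp x, n = n_x, K = G_x and c = c_x, the uniform distribution on K. Since 0 is in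
  S^n, the supports of the powers of x^n increase to the subgroup K, so some w = x^(n N) has
  support exactly K. Then w dominates a positive multiple of c, and a Doeblin argument gives
  |w^j - c| <= rho^j with rho < 1; hence x^k = c x^(k mod n) + O(rho^(k div n N)).
  The hypothesis n_(x c) = n_x gives m_x = n_x and puts the sets S^r, r < n, into pairwise
  distinct cosets of K. Substituting into the series, p(x) is c sum_r x^r s_r + (e - c) a_0
  up to an error of at most sup_(k>=1) |a_k| times a constant, where s_r is the sum of the
  coefficients of index r mod m. Evaluating the main term on S^r isolates s_r, and comparing
  its values at 0 and at some k in K - {0} isolates a_0.
*)

section \<open>Convolution on the group algebra\<close>

lemma sum_UNIV_add_left:
  fixes f :: "'g::{group_add,finite} \<Rightarrow> 'b::comm_monoid_add"
  shows "(\<Sum>g\<in>UNIV. f (a + g)) = (\<Sum>g\<in>UNIV. f g)"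
  by (rule sum.reindex_bij_witness[of _ "\<lambda>g. - a + g" "\<lambda>g. a + g"]) (auto simp: add.assoc[symmetric])

lemma sum_UNIV_minus_add:
  fixes f :: "'g::{group_add,finite} \<Rightarrow> 'b::comm_monoid_add"
  shows "(\<Sum>g\<in>UNIV. f (- g + h)) = (\<Sum>g\<in>UNIV. f g)"
  by (rule sum.reindex_bij_witness[of _ "\<lambda>g. h + - g" "\<lambda>g. - g + h"])
     (auto simp: add.assoc[symmetric] minus_add)

lemma ga_mult_altdef: "ga_mult x y h = (\<Sum>g\<in>UNIV. x (h + - g) * y g)"
  unfolding ga_mult_def
  by (rule sum.reindex_bij_witness[of _ "\<lambda>g. h + - g" "\<lambda>g. - g + h"])
     (auto simp: add.assoc[symmetric] minus_add)

lemma ga_mult_assoc: "ga_mult (ga_mult x y) z = ga_mult x (ga_mult y z)"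
proof
  fix h
  have "ga_mult (ga_mult x y) z h = (\<Sum>g\<in>UNIV. \<Sum>a\<in>UNIV. x a * y (- a + g) * z (- g + h))"
    by (simp add: ga_mult_def sum_distrib_right)
  also have "\<dots> = (\<Sum>a\<in>UNIV. \<Sum>g\<in>UNIV. x a * y (- a + g) * z (- g + h))"
    by (rule sum.swap)
  also have "\<dots> = (\<Sum>a\<in>UNIV. \<Sum>b\<in>UNIV. x a * y (- a + (a + b)) * z (- (a + b) + h))"
    by (rule sum.cong[OF refl], rule sum_UNIV_add_left[symmetric])
  also have "\<dots> = (\<Sum>a\<in>UNIV. \<Sum>b\<in>UNIV. x a * (y b * z (- b + (- a + h))))"
    by (simp add: add.assoc[symmetric] minus_add mult.assoc)
  also have "\<dots> = ga_mult x (ga_mult y z) h"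
    by (simp add: ga_mult_def sum_distrib_left)
  finally show "ga_mult (ga_mult x y) z h = ga_mult x (ga_mult y z) h" .
qed

lemma ga_mult_unit_left [simp]: "ga_mult ga_unit y = y"
proof
  fix h
  have "ga_mult ga_unit y h = (\<Sum>g\<in>UNIV. if g = 0 then y (- g + h) else 0)"
    unfolding ga_mult_def ga_unit_def by (rule sum.cong) auto
  then show "ga_mult ga_unit y h = y h" by simp
qed

lemma ga_mult_unit_right [simp]: "ga_mult y ga_unit = y"
proof
  fix h
  have "ga_mult y ga_unit h = (\<Sum>g\<in>UNIV. if g = 0 then y (h + - g) else 0)"
    unfolding ga_mult_altdef ga_unit_def by (rule sum.cong) auto
  then show "ga_mult y ga_unit h = y h" by simp
qed

lemma ga_mult_diff_left: "ga_mult (x - y) z = ga_mult x z - ga_mult y z"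
  by (rule ext) (simp add: ga_mult_def left_diff_distrib sum_subtractf)

lemma ga_mult_sum_right:
  "ga_mult z (\<lambda>g. \<Sum>r\<in>A. f r g * t r) h = (\<Sum>r\<in>A. ga_mult z (f r) h * t r)"
proof -
  have "ga_mult z (\<lambda>g. \<Sum>r\<in>A. f r g * t r) h = (\<Sum>g\<in>UNIV. \<Sum>r\<in>A. z g * f r (- g + h) * t r)"
    by (simp add: ga_mult_def sum_distrib_left mult.assoc)
  also have "\<dots> = (\<Sum>r\<in>A. ga_mult z (f r) h * t r)"
    by (subst sum.swap) (simp add: ga_mult_def sum_distrib_right)
  finally show ?thesis .
qed

lemma ga_mult_lincomb:
  "ga_mult (\<lambda>g. p * f1 g + f2 g) (\<lambda>g. q * g1 g + g2 g) h =
     p * q * ga_mult f1 g1 h + p * ga_mult f1 g2 h + q * ga_mult f2 g1 h + ga_mult f2 g2 h"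
  by (simp add: ga_mult_def algebra_simps sum.distrib sum_distrib_left)

lemma ga_pow_add: "ga_pow x (i + j) = ga_mult (ga_pow x i) (ga_pow x j)"
  by (induction i) (simp_all add: ga_mult_assoc)

lemma ga_pow_mult: "ga_pow x (i * j) = ga_pow (ga_pow x i) j"
  by (induction j) (simp_all add: ga_pow_add)

lemma sum_ga_mult: "(\<Sum>h\<in>UNIV. ga_mult x y h) = (\<Sum>g\<in>UNIV. x g) * (\<Sum>g\<in>UNIV. y g)"
proof -
  have "(\<Sum>h\<in>UNIV. ga_mult x y h) = (\<Sum>g\<in>UNIV. \<Sum>h\<in>UNIV. x g * y (- g + h))"
    unfolding ga_mult_def by (rule sum.swap)
  also have "\<dots> = (\<Sum>g\<in>UNIV. x g * (\<Sum>h\<in>UNIV. y h))"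
    by (simp add: sum_distrib_left[symmetric] sum_UNIV_add_left)
  finally show ?thesis by (simp add: sum_distrib_right)
qed

lemma sum_ga_pow: "(\<Sum>h\<in>UNIV. ga_pow x k h) = (\<Sum>g\<in>UNIV. x g) ^ k"
  by (induction k) (simp_all add: sum_ga_mult ga_unit_def)

lemma ga_mult_nonneg: "(\<And>g. 0 \<le> x g) \<Longrightarrow> (\<And>g. 0 \<le> y g) \<Longrightarrow> 0 \<le> ga_mult x y h"
  by (simp add: ga_mult_def sum_nonneg)

lemma ga_pow_nonneg: "(\<And>g. 0 \<le> x g) \<Longrightarrow> 0 \<le> ga_pow x k h"
  by (induction k arbitrary: h) (simp_all add: ga_unit_def ga_mult_nonneg)

lemma simplex_S_nonneg: "x \<in> simplex_S \<Longrightarrow> 0 \<le> x g"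
  by (simp add: simplex_S_def)

lemma simplex_S_le_1:
  assumes "x \<in> simplex_S" shows "x g \<le> 1"
proof -
  have "x g \<le> (\<Sum>g\<in>UNIV. x g)"
    using assms by (intro member_le_sum) (simp_all add: simplex_S_def)
  then show ?thesis using assms by (simp add: simplex_S_def)
qed

lemma ga_unit_simplex_S: "ga_unit \<in> simplex_S"
  by (simp add: simplex_S_def ga_unit_def)

lemma ga_mult_simplex_S: "x \<in> simplex_S \<Longrightarrow> y \<in> simplex_S \<Longrightarrow> ga_mult x y \<in> simplex_S"
  by (simp add: simplex_S_def sum_ga_mult ga_mult_nonneg)

lemma ga_pow_simplex_S: "x \<in> simplex_S \<Longrightarrow> ga_pow x k \<in> simplex_S"
  by (induction k) (simp_all add: ga_unit_simplex_S ga_mult_simplex_S)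

lemma abs_ga_mult_simplex_S_le:
  assumes "\<And>g. \<bar>u g\<bar> \<le> B" and "z \<in> simplex_S"
  shows "\<bar>ga_mult u z h\<bar> \<le> B"
proof -
  have "\<bar>ga_mult u z h\<bar> \<le> (\<Sum>g\<in>UNIV. \<bar>u g\<bar> * z (- g + h))"
    unfolding ga_mult_def
    by (rule order_trans[OF sum_abs]) (simp add: abs_mult simplex_S_nonneg[OF assms(2)])
  also have "\<dots> \<le> (\<Sum>g\<in>UNIV. B * z (- g + h))"
    by (intro sum_mono mult_right_mono assms(1) simplex_S_nonneg[OF assms(2)])
  also have "\<dots> = B * (\<Sum>g\<in>UNIV. z (- g + h))"
    by (rule sum_distrib_left[symmetric])
  also have "\<dots> = B"
    using assms(2) by (simp add: sum_UNIV_minus_add simplex_S_def)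
  finally show ?thesis .
qed

section \<open>Sumsets, supports and generated subgroups\<close>

primrec sumset_pow :: "'a::monoid_add set \<Rightarrow> nat \<Rightarrow> 'a set" where
  "sumset_pow A 0 = {0}"
| "sumset_pow A (Suc k) = A + sumset_pow A k"

lemma sumset_pow_add: "sumset_pow A (i + j) = sumset_pow A i + sumset_pow A j"
  by (induction i) (simp_all add: add.assoc flip: set_zero)

lemma sumset_pow_Suc2: "sumset_pow A (Suc k) = sumset_pow A k + A"
  using sumset_pow_add[of A k 1] by (simp flip: set_zero)

lemma sumset_pow_nonempty: "A \<noteq> {} \<Longrightarrow> sumset_pow A k \<noteq> {}"
  by (induction k) (auto simp: set_plus_def)

lemma sumset_pow_mono:
  assumes "0 \<in> A" shows "mono (sumset_pow A)"
proof (rule incseq_SucI)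
  fix k
  have "{0} + sumset_pow A k \<subseteq> A + sumset_pow A k"
    using assms by (intro set_plus_mono2) auto
  then show "sumset_pow A k \<subseteq> sumset_pow A (Suc k)" by (simp flip: set_zero)
qed

lemma sumset_pow_mono_base: "A \<subseteq> B \<Longrightarrow> sumset_pow A k \<subseteq> sumset_pow B k"
  by (induction k) (simp_all add: set_plus_mono2)

lemma sumset_pow_plus_subset:
  assumes "0 \<in> B"
  shows "sumset_pow A (Suc k) + B \<subseteq> sumset_pow (A + B) (Suc k)"
proof -
  have "A \<subseteq> A + B"
    using assms set_plus_intro[of _ A 0 B] by auto
  then have "sumset_pow A k + (A + B) \<subseteq> sumset_pow (A + B) k + (A + B)"
    by (intro set_plus_mono2 sumset_pow_mono_base) auto
  then show ?thesis by (simp only: sumset_pow_Suc2 add.assoc)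
qed

lemma Supp_ga_unit: "Supp ga_unit = {0}"
  by (auto simp: Supp_def ga_unit_def)

lemma Supp_ga_mult_subset: "Supp (ga_mult x y) \<subseteq> Supp x + Supp y"
proof
  fix h assume "h \<in> Supp (ga_mult x y)"
  then obtain g where "x g * y (- g + h) \<noteq> 0"
    unfolding Supp_def ga_mult_def by (meson mem_Collect_eq sum.neutral)
  then have "g + (- g + h) \<in> Supp x + Supp y" by (intro set_plus_intro) (auto simp: Supp_def)
  then show "h \<in> Supp x + Supp y" by (simp add: add.assoc[symmetric])
qed

lemma Supp_ga_mult:
  assumes "\<And>g. 0 \<le> x g" "\<And>g. 0 \<le> y g"
  shows "Supp (ga_mult x y) = Supp x + Supp y"
proof
  show "Supp x + Supp y \<subseteq> Supp (ga_mult x y)"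
  proof
    fix h assume "h \<in> Supp x + Supp y"
    then obtain a b where ab: "h = a + b" "x a \<noteq> 0" "y b \<noteq> 0"
      by (auto simp: Supp_def elim: set_plus_elim)
    have "0 < x a" "0 < y b" using ab assms by (simp_all add: order_less_le)
    then have "0 < x a * y (- a + h)" using ab by (simp add: add.assoc[symmetric])
    also have "x a * y (- a + h) \<le> ga_mult x y h"
      unfolding ga_mult_def by (rule member_le_sum) (auto intro: assms mult_nonneg_nonneg)
    finally show "h \<in> Supp (ga_mult x y)" by (simp add: Supp_def)
  qed
qed (rule Supp_ga_mult_subset)

lemma Supp_ga_pow: "(\<And>g. 0 \<le> x g) \<Longrightarrow> Supp (ga_pow x k) = sumset_pow (Supp x) k"
  by (induction k) (simp_all add: Supp_ga_unit Supp_ga_mult ga_pow_nonneg)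

lemma finite_add_closed_subgroup:
  fixes H :: "'g::group_add set"
  assumes "finite H" and add: "\<And>u v. u \<in> H \<Longrightarrow> v \<in> H \<Longrightarrow> u + v \<in> H" and "a \<in> H"
  shows "0 \<in> H" and "- a \<in> H"
proof -
  have onto: "(+) a ` H = H"
    by (rule endo_inj_surj) (use assms in \<open>auto simp: inj_on_def\<close>)
  then obtain u where "u \<in> H" "a + u = a" using \<open>a \<in> H\<close> by (metis imageE)
  then show "0 \<in> H" by (metis add_left_cancel add.right_neutral)
  then obtain v where "v \<in> H" "a + v = 0" using onto by (metis imageE)
  then show "- a \<in> H" by (simp add: minus_unique)
qed

lemma gen_subgroup_superset: "A \<subseteq> gen_subgroup A"
  unfolding gen_subgroup_def by (rule Inter_greatest) simp

lemma gen_subgroup_zero: "0 \<in> gen_subgroup A"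
  unfolding gen_subgroup_def by (rule InterI) simp

lemma gen_subgroup_add: "u \<in> gen_subgroup A \<Longrightarrow> v \<in> gen_subgroup A \<Longrightarrow> u + v \<in> gen_subgroup A"
  unfolding gen_subgroup_def by simp

lemma gen_subgroup_uminus: "u \<in> gen_subgroup A \<Longrightarrow> - u \<in> gen_subgroup A"
  unfolding gen_subgroup_def by simp

lemma gen_subgroup_minimal:
  assumes "A \<subseteq> H" "0 \<in> H" "\<And>u v. u \<in> H \<Longrightarrow> v \<in> H \<Longrightarrow> u + v \<in> H" "\<And>u. u \<in> H \<Longrightarrow> - u \<in> H"
  shows "gen_subgroup A \<subseteq> H"
  unfolding gen_subgroup_def by (rule Inter_lower) (simp add: assms)

lemma finite_subset_mono_Union:
  assumes "finite A" "A \<subseteq> (\<Union>j. F j)" "mono (F :: nat \<Rightarrow> 'a set)"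
  shows "\<exists>N. A \<subseteq> F N"
  using assms(1,2)
proof (induction A rule: finite_induct)
  case (insert a A)
  then obtain N j where "A \<subseteq> F N" "a \<in> F j" by auto
  moreover have "F N \<subseteq> F (max N j)" "F j \<subseteq> F (max N j)"
    using assms(3) by (simp_all add: monoD)
  ultimately have "insert a A \<subseteq> F (max N j)" by auto
  then show ?case ..
qed simp

section \<open>Series and sequences\<close>

lemma summable_power_div:
  fixes \<rho> :: real
  assumes "0 \<le> \<rho>" "\<rho> < 1" "1 \<le> D"
  shows "summable (\<lambda>k. \<rho> ^ (k div D))"
proof -
  define \<rho>' where "\<rho>' = (1 + \<rho>) / 2"
  have \<rho>': "0 < \<rho>'" "\<rho>' < 1" "\<rho> \<le> \<rho>'" using assms unfolding \<rho>'_def by auto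
  define \<theta> where "\<theta> = root D \<rho>'"
  have \<theta>: "0 < \<theta>" "\<theta> < 1" "\<theta> ^ D = \<rho>'"
    unfolding \<theta>_def using \<rho>' assms by (auto simp: real_root_lt_1_iff real_root_pow_pos2)
  have bound: "\<rho> ^ (k div D) \<le> \<theta> ^ k / \<rho>'" for k
  proof -
    have "\<theta> ^ D \<le> \<theta> ^ (k mod D)"
      using \<theta> assms by (intro power_decreasing) (auto intro: less_imp_le mod_le_divisor)
    then have "\<rho>' \<le> \<theta> ^ (k mod D)"
      using \<theta>(3) by simp
    then have "\<rho>' ^ (k div D) * \<rho>' \<le> \<rho>' ^ (k div D) * \<theta> ^ (k mod D)"
      using \<rho>' by (intro mult_left_mono) auto
    also have "\<dots> = \<theta> ^ k"
      by (metis \<theta>(3) div_mult_mod_eq mult.commute power_add power_mult)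
    finally have "\<rho>' ^ (k div D) \<le> \<theta> ^ k / \<rho>'"
      using \<rho>' by (simp add: field_simps)
    moreover have "\<rho> ^ (k div D) \<le> \<rho>' ^ (k div D)"
      using assms \<rho>' by (intro power_mono) auto
    ultimately show ?thesis by linarith
  qed
  have "summable (\<lambda>k. \<theta> ^ k / \<rho>')"
    using \<theta> by (intro summable_divide summable_geometric) simp
  then show ?thesis
    by (rule summable_comparison_test') (use bound assms(1) in simp)
qed

lemma suminf_residue_class:
  fixes f :: "nat \<Rightarrow> real"
  assumes "r < m"
  shows "(\<Sum>k. if k mod m = r then f k else 0) = (\<Sum>j. f (j * m + r))"
proof -
  have "strict_mono (\<lambda>j. j * m + r)"
    using assms by (intro strict_monoI) simp
  moreover have "(if k mod m = r then f k else 0) = 0" if "k \<notin> range (\<lambda>j. j * m + r)" for k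
    using that div_mult_mod_eq[of k m] by (metis rangeI)
  ultimately show ?thesis
    using suminf_mono_reindex[of "\<lambda>j. j * m + r" "\<lambda>k. if k mod m = r then f k else 0"] assms
    by simp
qed

lemma suminf_mult_mod_eq:
  fixes f g :: "nat \<Rightarrow> real"
  assumes "summable (\<lambda>k. \<bar>f k\<bar>)" "0 < m"
  shows "(\<Sum>k. f k * g (k mod m)) = (\<Sum>r<m. g r * (\<Sum>j. f (j * m + r)))"
proof -
  define F where "F r k = (if k mod m = r then f k else 0)" for r k
  have summable_F: "summable (F r)" for r
    using assms(1) by (rule summable_comparison_test') (simp add: F_def)
  have "f k * g (k mod m) = (\<Sum>r<m. F r k * g r)" for k
  proof -
    have "(\<Sum>r<m. F r k * g r) = (\<Sum>r<m. if k mod m = r then f k * g r else 0)"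
      unfolding F_def by (rule sum.cong) auto
    then show ?thesis using assms(2) by simp
  qed
  then have "(\<Sum>k. f k * g (k mod m)) = (\<Sum>r<m. \<Sum>k. F r k * g r)"
    using summable_F by (simp add: suminf_sum summable_mult2)
  also have "\<dots> = (\<Sum>r<m. (\<Sum>k. F r k) * g r)"
    by (simp add: suminf_mult2[OF summable_F])
  also have "\<dots> = (\<Sum>r<m. g r * (\<Sum>j. f (j * m + r)))"
    by (rule sum.cong) (simp_all add: F_def suminf_residue_class)
  finally show ?thesis .
qed

lemma tendsto_fun_iff:
  fixes F :: "nat \<Rightarrow> 'a \<Rightarrow> real"
  shows "F \<longlonglongrightarrow> L \<longleftrightarrow> (\<forall>h. (\<lambda>n. F n h) \<longlonglongrightarrow> L h)"
proof -
  have "F \<longlonglongrightarrow> L \<longleftrightarrow> limitin (product_topology (\<lambda>_. euclidean) UNIV) F L sequentially"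
    by (simp add: euclidean_product_topology)
  also have "\<dots> \<longleftrightarrow> (\<forall>h. (\<lambda>n. F n h) \<longlonglongrightarrow> L h)"
    by (simp add: limitin_componentwise)
  finally show ?thesis .
qed

lemma convergent_fun_iff:
  fixes F :: "nat \<Rightarrow> 'a \<Rightarrow> real"
  shows "convergent F \<longleftrightarrow> (\<forall>h. convergent (\<lambda>n. F n h))"
  unfolding convergent_def tendsto_fun_iff by metis

lemma abs_le_SUP_abs:
  fixes b :: "nat \<Rightarrow> real"
  assumes "summable (\<lambda>k. \<bar>b k\<bar>)" "1 \<le> k"
  shows "\<bar>b k\<bar> \<le> (SUP k\<in>{1..}. \<bar>b k\<bar>)"
proof (rule cSUP_upper)
  have "\<bar>b i\<bar> \<le> (\<Sum>k. \<bar>b k\<bar>)" for i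
    using sum_le_suminf[OF assms(1), of "{i}"] by simp
  then show "bdd_above ((\<lambda>k. \<bar>b k\<bar>) ` {1..})"
    by (intro bdd_aboveI2)
qed (use assms(2) in simp)

section \<open>The walk driven by an element of the simplex\<close>

locale random_walk =
  fixes x :: "'g::{group_add,finite} \<Rightarrow> real"
  assumes x_simplex: "x \<in> simplex_S"
begin

abbreviation "S \<equiv> Supp x"
abbreviation "K \<equiv> G_of x"
abbreviation "c \<equiv> c_of x"
abbreviation "n\<^sub>x \<equiv> n_of x"
abbreviation "m\<^sub>x \<equiv> m_of x"

lemma x_nonneg: "0 \<le> x g"
  using x_simplex by (rule simplex_S_nonneg)

lemma x_pow_nonneg: "0 \<le> ga_pow x k h"
  by (rule ga_pow_nonneg) (rule x_nonneg)

lemma Supp_nonempty: "S \<noteq> {}"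
proof
  assume "S = {}"
  then have "x = (\<lambda>_. 0)" by (auto simp: Supp_def)
  then show False using x_simplex by (simp add: simplex_S_def)
qed

lemma Supp_x_pow: "Supp (ga_pow x k) = sumset_pow S k"
  using Supp_ga_pow x_nonneg by blast

lemma n_of_eq: "n\<^sub>x = (LEAST k. 1 \<le> k \<and> 0 \<in> sumset_pow S k)"
  unfolding n_of_def Supp_x_pow[symmetric] by (simp add: Supp_def)

lemma zero_in_some_sumset_pow: "\<exists>k\<ge>1. 0 \<in> sumset_pow S k"
proof -
  let ?H = "\<Union>k\<in>{1..}. sumset_pow S k"
  obtain s where "s \<in> S" using Supp_nonempty by blast
  then have "s \<in> ?H" by (intro UN_I[of 1]) (auto simp flip: set_zero)
  moreover have "u + v \<in> ?H" if "u \<in> ?H" "v \<in> ?H" for u v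
    using that sumset_pow_add[of S] by (fastforce intro: set_plus_intro)
  ultimately have "0 \<in> ?H" by (intro finite_add_closed_subgroup(1)) auto
  then show ?thesis by auto
qed

lemma n_pos: "1 \<le> n\<^sub>x" and zero_in_sumset_pow_n: "0 \<in> sumset_pow S n\<^sub>x"
  using LeastI_ex[OF zero_in_some_sumset_pow] unfolding n_of_eq by auto

lemma K_eq: "K = gen_subgroup (sumset_pow S n\<^sub>x)"
  unfolding G_of_def Supp_x_pow ..

lemma sumset_pow_n_subset_K: "sumset_pow S n\<^sub>x \<subseteq> K"
  unfolding K_eq by (rule gen_subgroup_superset)

lemma K_zero: "0 \<in> K" and K_add: "u \<in> K \<Longrightarrow> v \<in> K \<Longrightarrow> u + v \<in> K"
  and K_uminus: "u \<in> K \<Longrightarrow> - u \<in> K"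
  unfolding K_eq by (rule gen_subgroup_zero gen_subgroup_add gen_subgroup_uminus; assumption)+

lemma K_add_left_iff: "u \<in> K \<Longrightarrow> u + v \<in> K \<longleftrightarrow> v \<in> K"
  by (metis K_add K_uminus add_minus_cancel)

lemma K_add_right_iff:
  assumes "v \<in> K" shows "u + v \<in> K \<longleftrightarrow> u \<in> K"
proof
  assume "u + v \<in> K"
  then have "u + v + - v \<in> K" using K_add K_uminus[OF assms] by blast
  then show "u \<in> K" by (simp add: add.assoc)
qed (use assms K_add in blast)

lemma card_K_pos: "0 < card K"
  using K_zero by (auto simp: card_gt_0_iff)

lemma c_eq: "c g = (if g \<in> K then 1 / real (card K) else 0)"
  by (simp add: c_of_def)

lemma c_simplex: "c \<in> simplex_S"
  using card_K_pos K_zero by (auto simp: simplex_S_def c_eq sum.If_cases)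

lemma c_nonneg: "0 \<le> c g"
  using c_simplex by (rule simplex_S_nonneg)

lemma Supp_c: "Supp c = K"
  by (auto simp: Supp_def c_eq)

lemma c_eq_unit_iff: "c = ga_unit \<longleftrightarrow> K = {0}"
proof
  assume "c = ga_unit"
  then have "c 0 = 1" by (simp add: ga_unit_def)
  then have "card K = 1" using K_zero by (simp add: c_eq)
  then obtain a where "K = {a}" by (rule card_1_singletonE)
  then show "K = {0}" using K_zero by simp
next
  assume "K = {0}"
  then show "c = ga_unit" by (simp add: fun_eq_iff c_eq ga_unit_def)
qed

lemma ga_mult_c_left:
  assumes "Supp u \<subseteq> K"
  shows "ga_mult c u = (\<lambda>h. (\<Sum>g\<in>UNIV. u g) * c h)"
proof
  fix h
  have "c (h + - g) * u g = c h * u g" for g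
    using assms K_add_right_iff[OF K_uminus, of g h] by (cases "g \<in> K") (auto simp: c_eq Supp_def)
  then have "ga_mult c u h = (\<Sum>g\<in>UNIV. c h * u g)"
    unfolding ga_mult_altdef by (rule sum.cong[OF refl])
  then show "ga_mult c u h = (\<Sum>g\<in>UNIV. u g) * c h"
    by (simp add: sum_distrib_left mult.commute)
qed

lemma ga_mult_c_right:
  assumes "Supp u \<subseteq> K"
  shows "ga_mult u c = (\<lambda>h. (\<Sum>g\<in>UNIV. u g) * c h)"
proof
  fix h
  have "u g * c (- g + h) = u g * c h" for g
    using assms K_add_left_iff[OF K_uminus, of g h] by (cases "g \<in> K") (auto simp: c_eq Supp_def)
  then have "ga_mult u c h = (\<Sum>g\<in>UNIV. u g * c h)"
    unfolding ga_mult_def by (rule sum.cong[OF refl])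
  then show "ga_mult u c h = (\<Sum>g\<in>UNIV. u g) * c h"
    by (simp add: sum_distrib_right)
qed

lemma ga_mult_c_left_invariant:
  assumes "k \<in> K"
  shows "ga_mult c z (k + h) = ga_mult c z h"
proof -
  have "c (k + h + - g) * z g = c (h + - g) * z g" for g
    by (simp only: add.assoc c_eq K_add_left_iff[OF assms])
  then show ?thesis
    unfolding ga_mult_altdef by (rule sum.cong[OF refl])
qed

lemma Supp_ga_pow_subset_K: "Supp u \<subseteq> K \<Longrightarrow> Supp (ga_pow u j) \<subseteq> K"
proof (induction j)
  case 0
  then show ?case using K_zero by (simp add: Supp_ga_unit)
next
  case (Suc j)
  have "Supp u + Supp (ga_pow u j) \<subseteq> K"
    using Suc K_add by (auto elim!: set_plus_elim)
  then show ?case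
    using Supp_ga_mult_subset[of u "ga_pow u j"] by simp
qed

lemma m_pos: "1 \<le> m\<^sub>x" and sumset_pow_m_subset_K: "sumset_pow S m\<^sub>x \<subseteq> K"
  and m_le_n: "m\<^sub>x \<le> n\<^sub>x"
proof -
  have n: "1 \<le> n\<^sub>x \<and> Supp (ga_pow x n\<^sub>x) \<subseteq> K"
    using n_pos sumset_pow_n_subset_K by (simp add: Supp_x_pow)
  show "1 \<le> m\<^sub>x" "sumset_pow S m\<^sub>x \<subseteq> K"
    using LeastI[of "\<lambda>k. 1 \<le> k \<and> Supp (ga_pow x k) \<subseteq> K", OF n]
    unfolding m_of_def Supp_x_pow by auto
  show "m\<^sub>x \<le> n\<^sub>x"
    unfolding m_of_def by (rule Least_le) (rule n)
qed

lemma c_x_pow_simplex: "ga_mult c (ga_pow x r) \<in> simplex_S"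
  using c_simplex ga_pow_simplex_S[OF x_simplex] by (rule ga_mult_simplex_S)

lemma ga_pow_uniform_mixture:
  assumes "Supp u \<subseteq> K" "(\<Sum>g\<in>UNIV. u g) = \<rho>"
  shows "ga_pow (\<lambda>h. (1 - \<rho>) * c h + u h) j h = (1 - \<rho> ^ j) * c h + ga_pow u j h"
proof (induction j arbitrary: h)
  case (Suc j)
  have sum_c: "(\<Sum>g\<in>UNIV. c g) = 1"
    using c_simplex by (simp add: simplex_S_def)
  have cc: "ga_mult c c h = c h"
    using ga_mult_c_left[of c] Supp_c sum_c by simp
  have cu: "ga_mult c (ga_pow u j) h = \<rho> ^ j * c h"
    using ga_mult_c_left[OF Supp_ga_pow_subset_K[OF assms(1)]] by (simp add: sum_ga_pow assms(2))
  have uc: "ga_mult u c h = \<rho> * c h"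
    using ga_mult_c_right[OF assms(1)] by (simp add: assms(2))
  have IH: "ga_pow (\<lambda>h. (1 - \<rho>) * c h + u h) j = (\<lambda>h. (1 - \<rho> ^ j) * c h + ga_pow u j h)"
    using Suc.IH by (rule ext)
  have "ga_pow (\<lambda>h. (1 - \<rho>) * c h + u h) (Suc j) h
      = ga_mult (\<lambda>h. (1 - \<rho>) * c h + u h) (\<lambda>h. (1 - \<rho> ^ j) * c h + ga_pow u j h) h"
    by (simp only: ga_pow.simps IH)
  also have "\<dots> = (1 - \<rho>) * (1 - \<rho> ^ j) * c h + (1 - \<rho>) * (\<rho> ^ j * c h)
      + (1 - \<rho> ^ j) * (\<rho> * c h) + ga_pow u (Suc j) h"
    by (simp add: ga_mult_lincomb cc cu uc)
  also have "\<dots> = (1 - \<rho> ^ Suc j) * c h + ga_pow u (Suc j) h"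
    by (simp add: algebra_simps)
  finally show ?case .
qed simp

lemma uniform_minorization:
  assumes "w \<in> simplex_S" "Supp w = K"
  obtains \<rho> u where "0 \<le> \<rho>" "\<rho> < 1" "\<And>h. 0 \<le> u h" "Supp u \<subseteq> K"
    "(\<Sum>h\<in>UNIV. u h) = \<rho>" "w = (\<lambda>h. (1 - \<rho>) * c h + u h)"
proof -
  define d where "d = Min (w ` K)"
  have d_le: "d \<le> w g" if "g \<in> K" for g
    unfolding d_def using that by simp
  have "d \<in> w ` K"
    unfolding d_def using K_zero by (intro Min_in) auto
  then have d_pos: "0 < d"
    using assms simplex_S_nonneg[OF assms(1)] by (auto simp: Supp_def order_less_le)
  define \<rho> where "\<rho> = 1 - d * card K"
  define u where "u h = w h - d * card K * c h" for h
  have dc: "d * card K * c h = (if h \<in> K then d else 0)" for h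
    using card_K_pos by (simp add: c_eq)
  have w_outside: "w h = 0" if "h \<notin> K" for h
    using that assms(2) by (auto simp: Supp_def)
  have u_nonneg: "0 \<le> u h" for h
    unfolding u_def dc using d_le w_outside by auto
  have Supp_u: "Supp u \<subseteq> K"
    unfolding u_def Supp_def dc using w_outside by auto
  have sum_u: "(\<Sum>h\<in>UNIV. u h) = \<rho>"
    using assms(1) c_simplex
    by (simp add: u_def \<rho>_def sum_subtractf sum_distrib_left[symmetric] simplex_S_def)
  have "0 \<le> \<rho>"
    unfolding sum_u[symmetric] by (rule sum_nonneg) (rule u_nonneg)
  moreover have "\<rho> < 1"
    unfolding \<rho>_def using d_pos card_K_pos by simp
  moreover have "w = (\<lambda>h. (1 - \<rho>) * c h + u h)"
    unfolding u_def \<rho>_def by (simp add: algebra_simps)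
  ultimately show thesis
    using that u_nonneg Supp_u sum_u by blast
qed

lemma abs_ga_pow_minus_uniform_le:
  assumes "w \<in> simplex_S" "Supp w = K"
  obtains \<rho> where "0 \<le> \<rho>" "\<rho> < 1" "\<And>j h. \<bar>ga_pow w j h - c h\<bar> \<le> \<rho> ^ j"
proof -
  obtain \<rho> u where \<rho>: "0 \<le> \<rho>" "\<rho> < 1" and u_nonneg: "\<And>h. 0 \<le> u h"
    and Supp_u: "Supp u \<subseteq> K" and sum_u: "(\<Sum>h\<in>UNIV. u h) = \<rho>"
    and w_eq: "w = (\<lambda>h. (1 - \<rho>) * c h + u h)"
    using uniform_minorization[OF assms] by blast
  have "\<bar>ga_pow w j h - c h\<bar> \<le> \<rho> ^ j" for j h
  proof -
    have uj_nonneg: "0 \<le> ga_pow u j g" for g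
      by (rule ga_pow_nonneg) (rule u_nonneg)
    have "ga_pow w j h - c h = ga_pow u j h - \<rho> ^ j * c h"
      unfolding w_eq ga_pow_uniform_mixture[OF Supp_u sum_u] by (simp add: algebra_simps)
    moreover have "ga_pow u j h \<le> \<rho> ^ j"
      using member_le_sum[of h UNIV "ga_pow u j"] uj_nonneg by (simp add: sum_ga_pow sum_u)
    moreover have "0 \<le> \<rho> ^ j * c h" "\<rho> ^ j * c h \<le> \<rho> ^ j"
      using \<rho> c_nonneg simplex_S_le_1[OF c_simplex] by (simp_all add: mult_left_le)
    ultimately show ?thesis using uj_nonneg[of h] by (simp add: abs_le_iff)
  qed
  with \<rho> show thesis by (rule that)
qed

lemma Supp_x_pow_n_mult_eq_K:
  obtains N where "1 \<le> N" "Supp (ga_pow x (n\<^sub>x * N)) = K"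
proof -
  let ?T = "sumset_pow S n\<^sub>x"
  let ?H = "\<Union>j. sumset_pow ?T j"
  have mono: "mono (sumset_pow ?T)"
    using zero_in_sumset_pow_n by (rule sumset_pow_mono)
  have H_add: "u + v \<in> ?H" if "u \<in> ?H" "v \<in> ?H" for u v
    using that sumset_pow_add[of ?T] by (fastforce intro: set_plus_intro)
  have "?T \<subseteq> ?H"
    by (intro UN_upper[of 1, THEN subset_trans[rotated]]) (auto simp flip: set_zero)
  moreover have "0 \<in> ?H" using sumset_pow.simps(1) by blast
  ultimately have "K \<subseteq> ?H"
    unfolding K_eq using H_add finite_add_closed_subgroup(2)[OF finite H_add]
    by (intro gen_subgroup_minimal) auto
  then obtain N\<^sub>0 where "K \<subseteq> sumset_pow ?T N\<^sub>0"
    using finite_subset_mono_Union[OF finite _ mono] by blast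
  then have "K \<subseteq> sumset_pow ?T (max 1 N\<^sub>0)"
    using monoD[OF mono, of N\<^sub>0 "max 1 N\<^sub>0"] by auto
  moreover have "Supp (ga_pow x (n\<^sub>x * max 1 N\<^sub>0)) = sumset_pow ?T (max 1 N\<^sub>0)"
    by (simp add: ga_pow_mult Supp_ga_pow ga_pow_nonneg x_nonneg Supp_x_pow)
  moreover have "Supp (ga_pow x (n\<^sub>x * max 1 N\<^sub>0)) \<subseteq> K"
    unfolding ga_pow_mult
    by (rule Supp_ga_pow_subset_K) (use sumset_pow_n_subset_K in \<open>simp add: Supp_x_pow\<close>)
  ultimately show thesis
    by (intro that[of "max 1 N\<^sub>0"]) auto
qed

lemma ga_mult_c_x_pow_n: "ga_mult c (ga_pow x (n\<^sub>x * q)) = c"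
proof -
  have "Supp (ga_pow x (n\<^sub>x * q)) \<subseteq> K"
    unfolding ga_pow_mult
    by (rule Supp_ga_pow_subset_K) (use sumset_pow_n_subset_K in \<open>simp add: Supp_x_pow\<close>)
  then show ?thesis
    using ga_pow_simplex_S[OF x_simplex] by (simp add: ga_mult_c_left simplex_S_def)
qed

lemma abs_ga_pow_minus_periodic_le:
  obtains \<rho> D where "0 \<le> \<rho>" "\<rho> < 1" "1 \<le> D"
    "\<And>k h. \<bar>ga_pow x k h - ga_mult c (ga_pow x (k mod n\<^sub>x)) h\<bar> \<le> \<rho> ^ (k div D)"
proof -
  obtain N where N: "1 \<le> N" "Supp (ga_pow x (n\<^sub>x * N)) = K"
    using Supp_x_pow_n_mult_eq_K by blast
  define D where "D = n\<^sub>x * N"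
  define w where "w = ga_pow x D"
  obtain \<rho> where \<rho>: "0 \<le> \<rho>" "\<rho> < 1" "\<And>j h. \<bar>ga_pow w j h - c h\<bar> \<le> \<rho> ^ j"
    using abs_ga_pow_minus_uniform_le[of w] ga_pow_simplex_S[OF x_simplex] N(2)
    unfolding w_def D_def by blast
  have "\<bar>ga_pow x k h - ga_mult c (ga_pow x (k mod n\<^sub>x)) h\<bar> \<le> \<rho> ^ (k div D)" for k h
  proof -
    have split: "ga_pow x k = ga_mult (ga_pow w (k div D)) (ga_pow x (k mod D))"
      unfolding w_def ga_pow_mult[symmetric] ga_pow_add[symmetric] by simp
    have "k mod D = n\<^sub>x * (k mod D div n\<^sub>x) + k mod n\<^sub>x"
      unfolding D_def by (metis div_mult_mod_eq mod_mod_cancel dvd_triv_left mult.commute)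
    then have "ga_mult c (ga_pow x (k mod D)) = ga_mult c (ga_pow x (k mod n\<^sub>x))"
      by (metis ga_pow_add ga_mult_assoc ga_mult_c_x_pow_n)
    then have "ga_pow x k h - ga_mult c (ga_pow x (k mod n\<^sub>x)) h
        = ga_mult (ga_pow w (k div D) - c) (ga_pow x (k mod D)) h"
      by (simp add: split ga_mult_diff_left)
    also have "\<bar>\<dots>\<bar> \<le> \<rho> ^ (k div D)"
      by (intro abs_ga_mult_simplex_S_le ga_pow_simplex_S x_simplex) (simp add: \<rho>(3))
    finally show ?thesis .
  qed
  moreover have "1 \<le> D" unfolding D_def using n_pos N(1) by simp
  ultimately show thesis using \<rho> that by blast
qed

(* The right-hand side of the limit formula, c (sum_(r<m) x^r s_r) + (e - c) a_0: the value of p(x)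
   once every x^k with k >= 1 is replaced by c x^(k mod m). *)
definition asymp_eval :: "(nat \<Rightarrow> real) \<Rightarrow> real \<Rightarrow> 'g \<Rightarrow> real" where
  "asymp_eval s a\<^sub>0 =
     (\<lambda>h. ga_mult c (\<lambda>g. \<Sum>r<m\<^sub>x. ga_pow x r g * s r) h + (ga_unit h - c h) * a\<^sub>0)"

lemma asymp_eval_eq:
  "asymp_eval s a\<^sub>0 h = (\<Sum>r<m\<^sub>x. ga_mult c (ga_pow x r) h * s r) + (ga_unit h - c h) * a\<^sub>0"
  by (simp add: asymp_eval_def ga_mult_sum_right)

lemma asymp_eval_zero_minus:
  assumes "k \<in> K" "k \<noteq> 0"
  shows "asymp_eval s a\<^sub>0 0 - asymp_eval s a\<^sub>0 k = a\<^sub>0"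
  using assms ga_mult_c_left_invariant[OF assms(1), of _ 0] K_zero
  by (simp add: asymp_eval_def ga_unit_def c_eq algebra_simps)

lemma tendsto_asymp_eval:
  assumes "\<And>r. r < m\<^sub>x \<Longrightarrow> (\<lambda>n. s n r) \<longlonglongrightarrow> s' r" and "c = ga_unit \<or> a\<^sub>0 \<longlonglongrightarrow> a\<^sub>0'"
  shows "(\<lambda>n. asymp_eval (s n) (a\<^sub>0 n) h) \<longlonglongrightarrow> asymp_eval s' a\<^sub>0' h"
proof -
  have "(\<lambda>n. (ga_unit h - c h) * a\<^sub>0 n) \<longlonglongrightarrow> (ga_unit h - c h) * a\<^sub>0'"
    using assms(2) by (auto intro: tendsto_mult_left)
  moreover have "(\<lambda>n. \<Sum>r<m\<^sub>x. ga_mult c (ga_pow x r) h * s n r)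
      \<longlonglongrightarrow> (\<Sum>r<m\<^sub>x. ga_mult c (ga_pow x r) h * s' r)"
    using assms(1) by (intro tendsto_sum tendsto_mult_left) auto
  ultimately show ?thesis
    unfolding asymp_eval_eq by (intro tendsto_add)
qed

end

section \<open>Walks with n_(xc) = n_x\<close>

locale cyclic_walk = random_walk x for x :: "'g::{group_add,finite} \<Rightarrow> real" +
  assumes n_of_xc: "n_of (ga_mult x c) = n\<^sub>x"
begin

lemma Supp_xc_pow: "Supp (ga_pow (ga_mult x c) j) = sumset_pow (S + K) j"
proof -
  have "0 \<le> ga_mult x c g" for g
    using x_nonneg c_nonneg by (rule ga_mult_nonneg)
  then show ?thesis
    using x_nonneg c_nonneg by (simp add: Supp_ga_pow Supp_ga_mult Supp_c)
qed

lemma n_le_if_sumset_pow_meets_K: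
  assumes "1 \<le> j" "b \<in> sumset_pow S j" "b \<in> K"
  shows "n\<^sub>x \<le> j"
proof -
  obtain i where j: "j = Suc i" using assms(1) by (cases j) auto
  have "b + - b \<in> sumset_pow S (Suc i) + K"
    using assms K_uminus j by (intro set_plus_intro) auto
  then have "0 \<in> sumset_pow (S + K) (Suc i)"
    using sumset_pow_plus_subset[OF K_zero, of S i] by auto
  then have "0 \<in> Supp (ga_pow (ga_mult x c) j)"
    unfolding Supp_xc_pow j .
  then have "n_of (ga_mult x c) \<le> j"
    unfolding n_of_def using assms(1) by (intro Least_le) (simp add: Supp_def)
  then show ?thesis by (simp add: n_of_xc)
qed

lemma m_eq_n: "m\<^sub>x = n\<^sub>x"
proof -
  obtain b where "b \<in> sumset_pow S m\<^sub>x"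
    using sumset_pow_nonempty[OF Supp_nonempty] by blast
  then have "n\<^sub>x \<le> m\<^sub>x"
    using m_pos sumset_pow_m_subset_K by (intro n_le_if_sumset_pow_meets_K) auto
  with m_le_n show ?thesis by simp
qed

lemma sumset_pow_coset_eq:
  assumes "k \<in> K" "a \<in> sumset_pow S r" "b \<in> sumset_pow S r'" "k + a = b" "r < n\<^sub>x" "r' < n\<^sub>x"
  shows "r = r'"
proof -
  have False if "r < r'" "r' < n\<^sub>x" "k \<in> K" "a \<in> sumset_pow S r" "b \<in> sumset_pow S r'" "k + a = b"
    for k a b r r'
  proof -
    \<comment> \<open>Extend \<open>a\<close> and \<open>b\<close> by one \<open>d\<close> so that \<open>b + d\<close> lands in \<open>S^n \<subseteq> K\<close>; then \<open>a + d\<close>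
      lies in \<open>K\<close> and in \<open>S^j\<close> with \<open>0 < j < n\<close>, contradicting \<open>n_of (x c) = n\<^sub>x\<close>.\<close>
    obtain d where d: "d \<in> sumset_pow S (n\<^sub>x - r')"
      using sumset_pow_nonempty[OF Supp_nonempty] by blast
    have "b + d \<in> sumset_pow S (r' + (n\<^sub>x - r'))"
      using that(5) d by (simp add: sumset_pow_add set_plus_intro)
    then have "b + d \<in> K"
      using that(2) sumset_pow_n_subset_K by auto
    moreover have "a + d = - k + (b + d)"
      using that(6) by (auto simp: add.assoc[symmetric])
    ultimately have "a + d \<in> K"
      using that(3) by (simp add: K_add K_uminus)
    moreover have "a + d \<in> sumset_pow S (r + (n\<^sub>x - r'))"
      using that(4) d by (simp add: sumset_pow_add set_plus_intro)
    ultimately have "n\<^sub>x \<le> r + (n\<^sub>x - r')"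
      using that(2) by (intro n_le_if_sumset_pow_meets_K) auto
    then show False using that(1,2) by simp
  qed
  moreover have "- k + b = a" using assms(4) by (auto simp: add.assoc[symmetric])
  ultimately show ?thesis
    using assms K_uminus by (metis linorder_cases)
qed

lemma Supp_c_x_pow: "Supp (ga_mult c (ga_pow x r)) = K + sumset_pow S r"
  using c_nonneg x_pow_nonneg
  by (simp add: Supp_ga_mult Supp_c Supp_x_pow)

lemma c_x_pow_pos:
  assumes "b \<in> sumset_pow S r"
  shows "0 < ga_mult c (ga_pow x r) b"
proof -
  have "0 + b \<in> K + sumset_pow S r"
    using K_zero assms by (rule set_plus_intro)
  then have "b \<in> Supp (ga_mult c (ga_pow x r))"
    unfolding Supp_c_x_pow by simp
  then have "ga_mult c (ga_pow x r) b \<noteq> 0"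
    by (simp add: Supp_def)
  moreover have "0 \<le> ga_mult c (ga_pow x r) b"
    using c_nonneg x_pow_nonneg by (rule ga_mult_nonneg)
  ultimately show ?thesis by simp
qed

lemma c_x_pow_eq_0:
  assumes "r < m\<^sub>x" "r' < m\<^sub>x" "r \<noteq> r'" "b \<in> sumset_pow S r"
  shows "ga_mult c (ga_pow x r') b = 0"
proof (rule ccontr)
  assume "ga_mult c (ga_pow x r') b \<noteq> 0"
  then have "b \<in> Supp (ga_mult c (ga_pow x r'))"
    by (simp add: Supp_def)
  then have "b \<in> K + sumset_pow S r'"
    unfolding Supp_c_x_pow .
  then obtain k a where "k \<in> K" "a \<in> sumset_pow S r'" "k + a = b"
    by (auto elim: set_plus_elim)
  then have "r' = r"
    using assms m_eq_n by (intro sumset_pow_coset_eq) auto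
  with assms(3) show False by simp
qed

lemma asymp_eval_at_sumset_pow:
  assumes "r < m\<^sub>x" "b \<in> sumset_pow S r"
  shows "asymp_eval s a\<^sub>0 b = ga_mult c (ga_pow x r) b * s r + (ga_unit b - c b) * a\<^sub>0"
proof -
  have "(\<Sum>r'<m\<^sub>x. ga_mult c (ga_pow x r') b * s r') = ga_mult c (ga_pow x r) b * s r"
    using assms c_x_pow_eq_0 by (subst sum.remove[of _ r]) (auto intro!: sum.neutral)
  then show ?thesis by (simp add: asymp_eval_eq)
qed

lemma convergent_residue_sum:
  assumes "\<forall>h. convergent (\<lambda>n. asymp_eval (s n) (a\<^sub>0 n) h)" "c = ga_unit \<or> convergent a\<^sub>0"
    and "r < m\<^sub>x"
  shows "convergent (\<lambda>n. s n r)"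
proof -
  obtain b where b: "b \<in> sumset_pow S r"
    using sumset_pow_nonempty[OF Supp_nonempty] by blast
  have "convergent (\<lambda>n. (ga_unit b - c b) * a\<^sub>0 n)"
  proof (cases "c = ga_unit")
    case False
    then have "convergent a\<^sub>0" using assms(2) by simp
    then show ?thesis by (auto simp: convergent_def intro: tendsto_mult_left)
  qed (simp add: convergent_const)
  then have "convergent (\<lambda>n. asymp_eval (s n) (a\<^sub>0 n) b - (ga_unit b - c b) * a\<^sub>0 n)"
    using assms(1) by (intro convergent_diff) auto
  then have "convergent (\<lambda>n. ga_mult c (ga_pow x r) b * s n r)"
    by (simp add: asymp_eval_at_sumset_pow[OF assms(3) b])
  then show ?thesis
    using c_x_pow_pos[OF b] by (simp add: convergent_mult_const_iff)
qed

lemma convergent_constant_term: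
  assumes "\<forall>h. convergent (\<lambda>n. asymp_eval (s n) (a\<^sub>0 n) h)" "c \<noteq> ga_unit"
  shows "convergent a\<^sub>0"
proof -
  obtain k where "k \<in> K" "k \<noteq> 0"
    using assms(2) K_zero c_eq_unit_iff by blast
  then have "a\<^sub>0 = (\<lambda>n. asymp_eval (s n) (a\<^sub>0 n) 0 - asymp_eval (s n) (a\<^sub>0 n) k)"
    by (simp add: asymp_eval_zero_minus)
  then show ?thesis
    using assms(1) by (metis convergent_diff)
qed

definition transient :: "nat \<Rightarrow> 'g \<Rightarrow> real" where
  "transient k h = ga_pow x k h - ga_mult c (ga_pow x (k mod m\<^sub>x)) h"

lemma summable_abs_transient: "summable (\<lambda>k. \<bar>transient k h\<bar>)"
proof -
  obtain \<rho> D where "0 \<le> \<rho>" "\<rho> < 1" "1 \<le> D"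
    and bound: "\<And>k h. \<bar>ga_pow x k h - ga_mult c (ga_pow x (k mod n\<^sub>x)) h\<bar> \<le> \<rho> ^ (k div D)"
    using abs_ga_pow_minus_periodic_le by blast
  then have "summable (\<lambda>k. \<rho> ^ (k div D))"
    by (intro summable_power_div)
  then show ?thesis
    by (rule summable_comparison_test') (simp add: transient_def m_eq_n bound)
qed

lemma abs_transient_le_1: "\<bar>transient k h\<bar> \<le> 1"
  using x_pow_nonneg[of k h] simplex_S_le_1[OF ga_pow_simplex_S[OF x_simplex], of k h]
    simplex_S_nonneg[OF c_x_pow_simplex, of "k mod m\<^sub>x" h] simplex_S_le_1[OF c_x_pow_simplex, of "k mod m\<^sub>x" h]
  by (auto simp: transient_def abs_le_iff)

lemma pser_eval_eq:
  assumes "summable (\<lambda>k. \<bar>b k\<bar>)"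
  shows "pser_eval b x h = asymp_eval (\<lambda>r. \<Sum>j. b (j * m\<^sub>x + r)) (b 0) h
           + (\<Sum>k. b (Suc k) * transient (Suc k) h)"
proof -
  define L where "L k = ga_mult c (ga_pow x (k mod m\<^sub>x)) h" for k
  have L_abs_le_1: "\<bar>L k\<bar> \<le> 1" for k
    using simplex_S_nonneg[OF c_x_pow_simplex] simplex_S_le_1[OF c_x_pow_simplex]
    by (simp add: L_def abs_le_iff)
  have summable_L: "summable (\<lambda>k. b k * L k)"
    using assms by (rule summable_comparison_test') (simp add: abs_mult mult_left_le L_abs_le_1)
  have summable_T: "summable (\<lambda>k. b (Suc k) * transient (Suc k) h)"
    using assms[THEN summable_ignore_initial_segment[of _ 1]]
    by (rule summable_comparison_test') (simp add: abs_mult mult_left_le abs_transient_le_1)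
  have x_pow_split: "ga_pow x k h = L k + transient k h" for k
    by (simp add: L_def transient_def)
  have "(\<Sum>k. b (Suc k) * ga_pow x (Suc k) h)
      = (\<Sum>k. b (Suc k) * L (Suc k) + b (Suc k) * transient (Suc k) h)"
    by (simp only: x_pow_split distrib_left)
  also have "\<dots> = (\<Sum>k. b (Suc k) * L (Suc k)) + (\<Sum>k. b (Suc k) * transient (Suc k) h)"
    using summable_ignore_initial_segment[OF summable_L, of 1] summable_T
    by (intro suminf_add[symmetric]) simp_all
  also have "(\<Sum>k. b (Suc k) * L (Suc k)) = (\<Sum>k. b k * L k) - b 0 * c h"
    using suminf_split_head[OF summable_L] by (simp add: L_def)
  also have "(\<Sum>k. b k * L k) = (\<Sum>r<m\<^sub>x. ga_mult c (ga_pow x r) h * (\<Sum>j. b (j * m\<^sub>x + r)))"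
    unfolding L_def using assms m_pos by (intro suminf_mult_mod_eq) auto
  finally show ?thesis
    by (simp add: pser_eval_def asymp_eval_eq algebra_simps)
qed

lemma abs_pser_eval_minus_asymp_eval_le:
  assumes "summable (\<lambda>k. \<bar>b k\<bar>)"
  shows "\<bar>pser_eval b x h - asymp_eval (\<lambda>r. \<Sum>j. b (j * m\<^sub>x + r)) (b 0) h\<bar>
           \<le> (SUP k\<in>{1..}. \<bar>b k\<bar>) * (\<Sum>k. \<bar>transient (Suc k) h\<bar>)"
proof -
  have summable_T: "summable (\<lambda>k. \<bar>transient (Suc k) h\<bar>)"
    using summable_abs_transient by (subst summable_Suc_iff)
  have summable_bT: "summable (\<lambda>k. \<bar>b (Suc k) * transient (Suc k) h\<bar>)"
    using assms[THEN summable_ignore_initial_segment[of _ 1]]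
    by (rule summable_comparison_test') (simp add: abs_mult mult_left_le abs_transient_le_1)
  have "\<bar>pser_eval b x h - asymp_eval (\<lambda>r. \<Sum>j. b (j * m\<^sub>x + r)) (b 0) h\<bar>
      = \<bar>\<Sum>k. b (Suc k) * transient (Suc k) h\<bar>"
    by (simp add: pser_eval_eq[OF assms])
  also have "\<dots> \<le> (\<Sum>k. \<bar>b (Suc k) * transient (Suc k) h\<bar>)"
    using summable_bT by (rule summable_rabs)
  also have "\<dots> \<le> (\<Sum>k. (SUP k\<in>{1..}. \<bar>b k\<bar>) * \<bar>transient (Suc k) h\<bar>)"
  proof (rule suminf_le[OF _ summable_bT summable_mult[OF summable_T]])
    fix k
    show "\<bar>b (Suc k) * transient (Suc k) h\<bar> \<le> (SUP k\<in>{1..}. \<bar>b k\<bar>) * \<bar>transient (Suc k) h\<bar>"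
      unfolding abs_mult by (intro mult_right_mono abs_le_SUP_abs[OF assms]) simp_all
  qed
  also have "\<dots> = (SUP k\<in>{1..}. \<bar>b k\<bar>) * (\<Sum>k. \<bar>transient (Suc k) h\<bar>)"
    using summable_T by (rule suminf_mult)
  finally show ?thesis .
qed

context
  fixes a :: "nat \<Rightarrow> nat \<Rightarrow> real"
  assumes abs_summable: "\<And>n. summable (\<lambda>k. \<bar>a n k\<bar>)"
    and SUP_tendsto_0: "(\<lambda>n. SUP k\<in>{1..}. \<bar>a n k\<bar>) \<longlonglongrightarrow> 0"
begin

lemma tendsto_pser_eval_minus_asymp_eval:
  "(\<lambda>n. pser_eval (a n) x h - asymp_eval (\<lambda>r. \<Sum>j. a n (j * m\<^sub>x + r)) (a n 0) h) \<longlonglongrightarrow> 0"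
proof (rule Lim_null_comparison)
  show "(\<lambda>n. (SUP k\<in>{1..}. \<bar>a n k\<bar>) * (\<Sum>k. \<bar>transient (Suc k) h\<bar>)) \<longlonglongrightarrow> 0"
    using SUP_tendsto_0 by (rule tendsto_mult_left_zero)
qed (use abs_pser_eval_minus_asymp_eval_le[OF abs_summable] in simp)

lemma convergent_pser_eval_imp:
  assumes "convergent (\<lambda>n. pser_eval (a n) x)"
  shows "(c \<noteq> ga_unit \<longrightarrow> convergent (\<lambda>n. a n 0))
    \<and> (\<forall>r<m\<^sub>x. convergent (\<lambda>n. \<Sum>j. a n (j * m\<^sub>x + r)))"
proof -
  let ?s = "\<lambda>n r. \<Sum>j. a n (j * m\<^sub>x + r)"
  have Q: "convergent (\<lambda>n. asymp_eval (?s n) (a n 0) h)" for h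
  proof -
    obtain l where "(\<lambda>n. pser_eval (a n) x h) \<longlonglongrightarrow> l"
      using assms by (auto simp: convergent_fun_iff convergent_def)
    from Lim_transform2[OF this tendsto_pser_eval_minus_asymp_eval] show ?thesis
      by (rule convergentI)
  qed
  have "c \<noteq> ga_unit \<longrightarrow> convergent (\<lambda>n. a n 0)"
    using convergent_constant_term[of ?s "\<lambda>n. a n 0"] Q by blast
  moreover from this have "\<forall>r<m\<^sub>x. convergent (\<lambda>n. ?s n r)"
    using convergent_residue_sum[of ?s "\<lambda>n. a n 0"] Q by blast
  ultimately show ?thesis ..
qed

lemma tendsto_pser_eval_asymp_eval:
  assumes "c = ga_unit \<or> convergent (\<lambda>n. a n 0)"
    and "\<forall>r<m\<^sub>x. convergent (\<lambda>n. \<Sum>j. a n (j * m\<^sub>x + r))"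
  shows "(\<lambda>n. pser_eval (a n) x)
    \<longlonglongrightarrow> asymp_eval (\<lambda>r. lim (\<lambda>n. \<Sum>j. a n (j * m\<^sub>x + r))) (lim (\<lambda>n. a n 0))"
  unfolding tendsto_fun_iff
proof
  fix h
  have "(\<lambda>n. asymp_eval (\<lambda>r. \<Sum>j. a n (j * m\<^sub>x + r)) (a n 0) h)
    \<longlonglongrightarrow> asymp_eval (\<lambda>r. lim (\<lambda>n. \<Sum>j. a n (j * m\<^sub>x + r))) (lim (\<lambda>n. a n 0)) h"
    by (rule tendsto_asymp_eval) (use assms in \<open>auto simp: convergent_LIMSEQ_iff\<close>)
  from Lim_transform[OF this tendsto_pser_eval_minus_asymp_eval]
  show "(\<lambda>n. pser_eval (a n) x h)
    \<longlonglongrightarrow> asymp_eval (\<lambda>r. lim (\<lambda>n. \<Sum>j. a n (j * m\<^sub>x + r))) (lim (\<lambda>n. a n 0)) h" .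
qed

end

end

theorem theorem2:
  fixes a :: "nat \<Rightarrow> nat \<Rightarrow> real"
    and x :: "'g::{group_add,finite} \<Rightarrow> real"
  assumes abs_summ: "\<And>n. summable (\<lambda>k. \<bar>a n k\<bar>)"
    and sup_lim: "(\<lambda>n. SUP k\<in>{1..}. \<bar>a n k\<bar>) \<longlonglongrightarrow> 0"
    and xS: "x \<in> simplex_S"
    and nx: "n_of (ga_mult x (c_of x)) = n_of x"
  shows "(c_of x \<noteq> ga_unit \<longrightarrow>
            (convergent (\<lambda>n. pser_eval (a n) x) \<longleftrightarrow>
              convergent (\<lambda>n. a n 0) \<and>
              (\<forall>r<m_of x. convergent (\<lambda>n. \<Sum>k. a n (k * m_of x + r)))))
       \<and> (c_of x = ga_unit \<longrightarrow>
            (convergent (\<lambda>n. pser_eval (a n) x) \<longleftrightarrow>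
              (\<forall>r<m_of x. convergent (\<lambda>n. \<Sum>k. a n (k * m_of x + r)))))
       \<and> (convergent (\<lambda>n. pser_eval (a n) x) \<longrightarrow>
            (\<lambda>n. pser_eval (a n) x) \<longlonglongrightarrow>
              (\<lambda>h. ga_mult (c_of x)
                     (\<lambda>g. \<Sum>r<m_of x. ga_pow x r g * lim (\<lambda>n. \<Sum>k. a n (k * m_of x + r))) h
                   + (ga_unit h - c_of x h) * lim (\<lambda>n. a n 0)))"
proof -
  interpret cyclic_walk x
    using xS nx by unfold_locales
  show ?thesis
    using convergent_pser_eval_imp[OF abs_summ sup_lim]
      tendsto_pser_eval_asymp_eval[OF abs_summ sup_lim, unfolded asymp_eval_def]
    by (blast intro: convergentI)
qed

end
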